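(* Let $k,r,h$ be positive integers with $r\mid(k+h)$, and let $k'\le k$ be the largest integer divisible by $r$. If there exists a maximally recoverable local $(k,r,h)$-code over a finite field $\mathbb{F}$, then there exists a maximally recoverable data-local $(k',r,h)$-code over the same field $\mathbb{F}$.
   Context: Local codes: for positive integers $k,r,h$ with $r\mid(k+h)$, a local $(k,r,h)$-code over $\mathbb{F}$ is a linear systematic code of dimension $k$ and length $n=k+h+\frac{k+h}{r}$ consisting of $k$ data symbols, $h$ heavy parity symbols (each a fixed $\mathbb{F}$-linear combination of all data symbols), and, after partitioning the $k+h$ data and heavy parity symbols into $\frac{k+h}{r}$ groups of size $r$, one local parity per group equal to the sum (XOR in characteristic $2$) of the $r$ symbols of that group. A local group is such a group of $r$ symbols together with its local parity. A local $(k,r,h)$-code is maximally recoverable if for every set $E$ of coordinates obtained by picking exactly one coordinate from each of the $\frac{k+h}{r}$ local groups, puncturing the code in $E$ (deleting those coordinates) yields a maximum distance separable $[k+h,k]$ code (length $k+h$, dimension $k$, minimum distance $h+1$). Data-local codes: for positive integers $k',r,h$ with $r\mid k'$, a data-local $(k',r,h)$-code over $\mathbb{F}$ is a linear systematic code of dimension $k'$ and length $k'+\frac{k'}{r}+h$ consisting of $k'$ data symbols partitioned into $\frac{k'}{r}$ groups of size $r$, one local parity per group equal to the sum of the $r$ data symbols of the group, and $h$ heavy parity symbols each a fixed $\mathbb{F}$-linear combination of all data symbols. A local group is $r$ data symbols together with their local parity. A data-local $(k',r,h)$-code is maximally recoverable if for every set $E$ obtained by picking exactly one coordinate from each of the $\frac{k'}{r}$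 local groups, puncturing in $E$ yields a maximum distance separable $[k'+h,k']$ code. *)

theory Defs
  imports Complex_Main "HOL-Library.Function_Algebras"
begin

text \<open>Words are functions nat => F; a code of length n lives on a finite coordinate
set S (card S = n) and its words vanish outside S.
Vector-space structure on words: pointwise addition (Function_Algebras) and
pointwise scalar multiplication fscale.\<close>

definition fscale :: "'a::field \<Rightarrow> (nat \<Rightarrow> 'a) \<Rightarrow> (nat \<Rightarrow> 'a)" where
  "fscale c w = (\<lambda>i. c * w i)"

lemma vector_space_fscale: "vector_space (fscale :: 'a::field \<Rightarrow> _)"
  by unfold_locales (auto simp: fscale_def algebra_simps fun_eq_iff)

definition hweight :: "nat set \<Rightarrow> (nat \<Rightarrow> 'a::zero) \<Rightarrow> nat" where
  "hweight S w = card {i \<in> S. w i \<noteq> 0}"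

definition has_min_dist :: "(nat \<Rightarrow> 'a::zero) set \<Rightarrow> nat set \<Rightarrow> nat \<Rightarrow> bool" where
  "has_min_dist C S d \<longleftrightarrow>
     (\<forall>c\<in>C. c \<noteq> 0 \<longrightarrow> d \<le> hweight S c) \<and>
     ((\<exists>c\<in>C. c \<noteq> 0) \<longrightarrow> (\<exists>c\<in>C. c \<noteq> 0 \<and> hweight S c = d))"

definition is_MDS :: "(nat \<Rightarrow> 'a::field) set \<Rightarrow> nat set \<Rightarrow> nat \<Rightarrow> nat \<Rightarrow> bool" where
  "is_MDS C S n k \<longleftrightarrow>
     finite S \<and> card S = n \<and> (\<forall>c\<in>C. \<forall>i. i \<notin> S \<longrightarrow> c i = 0) \<and>
     module.subspace fscale C \<and> vector_space.dim fscale C = k \<and>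
     has_min_dist C S (n - k + 1)"

text \<open>Puncturing in E: delete the coordinates in E (words are set to 0 there, so
the punctured code lives on the coordinate set S = {0..<n} - E).\<close>
definition puncture :: "(nat \<Rightarrow> 'a::zero) set \<Rightarrow> nat set \<Rightarrow> (nat \<Rightarrow> 'a) set" where
  "puncture C E = (\<lambda>c. \<lambda>i. if i \<in> E then 0 else c i) ` C"

definition msgs :: "nat \<Rightarrow> (nat \<Rightarrow> 'a::zero) set" where
  "msgs k = {x. \<forall>i\<ge>k. x i = 0}"

definition picks_one :: "nat set \<Rightarrow> (nat \<Rightarrow> nat set) \<Rightarrow> nat \<Rightarrow> bool" where
  "picks_one E G m \<longleftrightarrow> E \<subseteq> (\<Union>t<m. G t) \<and> (\<forall>t<m. card (E \<inter> G t) = 1)"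

definition is_grouping :: "(nat \<Rightarrow> nat) \<Rightarrow> nat \<Rightarrow> nat \<Rightarrow> bool" where
  "is_grouping g N r \<longleftrightarrow> 0 < r \<and> r dvd N \<and> (\<forall>l<N. g l < N div r) \<and>
     (\<forall>t<N div r. card {l. l < N \<and> g l = t} = r)"

text \<open>Coordinates: 0..k-1 data, k..k+h-1 heavy parities (heavy parity j equals
sum over l<k of H j l * x l), k+h+t local parity of group t, t < (k+h) div r.\<close>
definition local_sym :: "(nat \<Rightarrow> nat \<Rightarrow> 'a::field) \<Rightarrow> nat \<Rightarrow> (nat \<Rightarrow> 'a) \<Rightarrow> nat \<Rightarrow> 'a" where
  "local_sym H k x i = (if i < k then x i else (\<Sum>l<k. H (i - k) l * x l))"

definition local_enc :: "(nat \<Rightarrow> nat \<Rightarrow> 'a::field) \<Rightarrow> (nat \<Rightarrow> nat) \<Rightarrow> nat \<Rightarrow> nat \<Rightarrow> nat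
    \<Rightarrow> (nat \<Rightarrow> 'a) \<Rightarrow> (nat \<Rightarrow> 'a)" where
  "local_enc H g k r h x = (\<lambda>i.
     if i < k + h then local_sym H k x i
     else if i < k + h + (k + h) div r then
       (\<Sum>l\<in>{l. l < k + h \<and> g l = i - (k + h)}. local_sym H k x l)
     else 0)"

definition local_code :: "(nat \<Rightarrow> nat \<Rightarrow> 'a::field) \<Rightarrow> (nat \<Rightarrow> nat) \<Rightarrow> nat \<Rightarrow> nat \<Rightarrow> nat
    \<Rightarrow> (nat \<Rightarrow> 'a) set" where
  "local_code H g k r h = local_enc H g k r h ` msgs k"

definition local_group :: "(nat \<Rightarrow> nat) \<Rightarrow> nat \<Rightarrow> nat \<Rightarrow> nat \<Rightarrow> nat set" where
  "local_group g k h t = {l. l < k + h \<and> g l = t} \<union> {k + h + t}"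

definition MR_local :: "(nat \<Rightarrow> nat \<Rightarrow> 'a::field) \<Rightarrow> (nat \<Rightarrow> nat) \<Rightarrow> nat \<Rightarrow> nat \<Rightarrow> nat \<Rightarrow> bool" where
  "MR_local H g k r h \<longleftrightarrow> is_grouping g (k + h) r \<and>
     (\<forall>E. picks_one E (local_group g k h) ((k + h) div r) \<longrightarrow>
        is_MDS (puncture (local_code H g k r h) E)
               ({0..<k + h + (k + h) div r} - E) (k + h) k)"

text \<open>Coordinates: 0..k-1 data, k+t local parity of group t (t < k div r),
k + k div r + j heavy parity j (j < h).\<close>
definition dl_enc :: "(nat \<Rightarrow> nat \<Rightarrow> 'a::field) \<Rightarrow> (nat \<Rightarrow> nat) \<Rightarrow> nat \<Rightarrow> nat \<Rightarrow> nat
    \<Rightarrow> (nat \<Rightarrow> 'a) \<Rightarrow> (nat \<Rightarrow> 'a)" where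
  "dl_enc H g k r h x = (\<lambda>i.
     if i < k then x i
     else if i < k + k div r then (\<Sum>l\<in>{l. l < k \<and> g l = i - k}. x l)
     else if i < k + k div r + h then (\<Sum>l<k. H (i - (k + k div r)) l * x l)
     else 0)"

definition dl_code :: "(nat \<Rightarrow> nat \<Rightarrow> 'a::field) \<Rightarrow> (nat \<Rightarrow> nat) \<Rightarrow> nat \<Rightarrow> nat \<Rightarrow> nat
    \<Rightarrow> (nat \<Rightarrow> 'a) set" where
  "dl_code H g k r h = dl_enc H g k r h ` msgs k"

definition dl_group :: "(nat \<Rightarrow> nat) \<Rightarrow> nat \<Rightarrow> nat \<Rightarrow> nat set" where
  "dl_group g k t = {l. l < k \<and> g l = t} \<union> {k + t}"

definition MR_data_local :: "(nat \<Rightarrow> nat \<Rightarrow> 'a::field) \<Rightarrow> (nat \<Rightarrow> nat) \<Rightarrow> nat \<Rightarrow> nat \<Rightarrow> nat \<Rightarrow> bool" where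
  "MR_data_local H g k r h \<longleftrightarrow> is_grouping g k r \<and>
     (\<forall>E. picks_one E (dl_group g k) (k div r) \<longrightarrow>
        is_MDS (puncture (dl_code H g k r h) E)
               ({0..<k + k div r + h} - E) (k + h) k)"

end

theory Submission
  imports Defs "HOL-Library.FuncSet"
begin

text \<open>Puncturing an MR local code at all its local parities leaves an MDS \<open>[k+h, k]\<close> code, so
any \<open>k\<close> of the data and heavy coordinates form an information set.  Choose as information set
the \<open>k'\<close> coordinates of the first \<open>k'/r\<close> local groups together with \<open>k - k'\<close> further
coordinates \<open>A\<close>, and keep only the codewords vanishing on \<open>A\<close>.  Read with the \<open>k'\<close> group
coordinates as data, the local parities of those groups as local parities and the \<open>h\<close> remaining
coordinates as heavy parities, this subcode is a data-local \<open>(k', r, h)\<close>-code.  An erasure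
pattern of it, together with the local parities of the remaining groups, is an erasure pattern of
the local code, and the punctured codewords correspond with no loss of weight; hence every
nonzero punctured codeword has weight at least \<open>h + 1\<close>, which for a linear \<open>[k'+h, k']\<close>
code is the MDS property.\<close>

interpretation fv: vector_space "fscale :: 'a::field \<Rightarrow> (nat \<Rightarrow> 'a) \<Rightarrow> _"
  by (rule vector_space_fscale)

definition words_on :: "nat set \<Rightarrow> (nat \<Rightarrow> 'a::zero) set" where
  "words_on P = {w. \<forall>i. i \<notin> P \<longrightarrow> w i = 0}"

definition restrict_word :: "nat set \<Rightarrow> (nat \<Rightarrow> 'a::zero) \<Rightarrow> nat \<Rightarrow> 'a" where
  "restrict_word P w = (\<lambda>i. if i \<in> P then w i else 0)"

definition unit_word :: "nat \<Rightarrow> nat \<Rightarrow> 'a::zero_neq_one" where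
  "unit_word i = (\<lambda>j. if j = i then 1 else 0)"

lemma unit_word_apply: "unit_word i j = (if j = i then 1 else 0)"
  by (simp add: unit_word_def)

lemma unit_word_eq_iff [simp]: "unit_word i = unit_word j \<longleftrightarrow> i = j"
  by (metis unit_word_def zero_neq_one)

lemma msgs_eq_words_on: "msgs K = words_on {..<K}"
  by (auto simp: msgs_def words_on_def)

lemma puncture_eq_image_restrict_word: "puncture C E = restrict_word (- E) ` C"
  unfolding puncture_def restrict_word_def by (rule image_cong) (auto simp: fun_eq_iff)

lemma restrict_word_in_words_on: "restrict_word P w \<in> words_on P"
  by (simp add: restrict_word_def words_on_def)

lemma bij_betw_restrict_words_on:
  "bij_betw (\<lambda>w. restrict w P) (words_on P) (\<Pi>\<^sub>E i\<in>P. (UNIV :: 'a::zero set))"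
  by (rule bij_betw_byWitness[where f' = "\<lambda>f. restrict_word P f"])
    (auto simp: words_on_def restrict_word_def fun_eq_iff PiE_def extensional_def)

lemma finite_words_on:
  "finite P \<Longrightarrow> finite (words_on P :: (nat \<Rightarrow> 'a::{zero,finite}) set)"
  using bij_betw_finite[OF bij_betw_restrict_words_on[of P, where 'a='a]]
    finite_PiE[of P "\<lambda>_. UNIV :: 'a set"]
  by simp

lemma card_words_on:
  "finite P \<Longrightarrow> card (words_on P :: (nat \<Rightarrow> 'a::{zero,finite}) set) = card (UNIV :: 'a set) ^ card P"
  using bij_betw_same_card[OF bij_betw_restrict_words_on[of P, where 'a='a]] by (simp add: card_PiE)

section \<open>Linear encoders of the message space\<close>

lemma sum_fun_apply: "(\<Sum>a\<in>A. f a) x = (\<Sum>a\<in>A. f a x)"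
  for f :: "'b \<Rightarrow> nat \<Rightarrow> 'a::comm_monoid_add"
  by (induction A rule: infinite_finite_induct) auto

lemma linear_fscaleI:
  fixes f :: "(nat \<Rightarrow> 'a::field) \<Rightarrow> nat \<Rightarrow> 'a"
  assumes "\<And>x y. f (x + y) = f x + f y" and "\<And>c x. f (fscale c x) = fscale c (f x)"
  shows "Vector_Spaces.linear fscale fscale f"
  using assms fv.module_axioms
  by (simp add: module_hom_iff_linear[symmetric] module_hom_iff)

lemma linear_restrict_word: "Vector_Spaces.linear fscale fscale (restrict_word P :: _ \<Rightarrow> nat \<Rightarrow> 'a::field)"
  by (rule linear_fscaleI) (simp_all add: restrict_word_def fscale_def fun_eq_iff)

lemma msgs_unit_word_expansion:
  assumes "y \<in> msgs K"
  shows "y = (\<Sum>i<K. fscale (y i) (unit_word i))"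
proof
  fix j
  have "(\<Sum>i<K. y i * unit_word i j) = (\<Sum>i<K. if j = i then y i else 0)"
    by (rule sum.cong) (auto simp: unit_word_def)
  then show "y j = (\<Sum>i<K. fscale (y i) (unit_word i)) j"
    using assms by (simp add: sum_fun_apply fscale_def msgs_def)
qed

lemma msgs_eq_span_unit_words: "msgs K = fv.span (unit_word ` {..<K} :: (nat \<Rightarrow> 'a::field) set)"
proof
  show "msgs K \<subseteq> fv.span (unit_word ` {..<K} :: (nat \<Rightarrow> 'a) set)"
  proof
    fix y :: "nat \<Rightarrow> 'a" assume y: "y \<in> msgs K"
    have "y = (\<Sum>i<K. fscale (y i) (unit_word i))"
      using y by (rule msgs_unit_word_expansion)
    also have "\<dots> \<in> fv.span (unit_word ` {..<K})"
      by (intro fv.span_sum fv.span_scale fv.span_base) auto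
    finally show "y \<in> fv.span (unit_word ` {..<K})" .
  qed
  have "fv.subspace (msgs K :: (nat \<Rightarrow> 'a) set)"
    by (auto simp: fv.subspace_def msgs_def fscale_def)
  then show "fv.span (unit_word ` {..<K} :: (nat \<Rightarrow> 'a) set) \<subseteq> msgs K"
    by (rule fv.span_minimal[rotated]) (auto simp: unit_word_def msgs_def)
qed

lemma independent_unit_words: "fv.independent (unit_word ` {..<K} :: (nat \<Rightarrow> 'a::field) set)"
proof (rule fv.independent_if_scalars_zero)
  fix f :: "(nat \<Rightarrow> 'a) \<Rightarrow> 'a" and x :: "nat \<Rightarrow> 'a"
  assume sum0: "(\<Sum>b\<in>unit_word ` {..<K}. fscale (f b) b) = 0" and x: "x \<in> unit_word ` {..<K}"
  then obtain i where x_eq: "x = unit_word i" by blast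
  have "(\<Sum>b\<in>unit_word ` {..<K}. fscale (f b) b) i = (\<Sum>b\<in>unit_word ` {..<K}. if b = x then f b else 0)"
    unfolding sum_fun_apply fscale_def by (rule sum.cong) (auto simp: x_eq unit_word_apply)
  also have "\<dots> = f x"
    using x by simp
  finally show "f x = 0"
    using sum0 by simp
qed simp

lemma dim_linear_image_msgs:
  fixes \<psi> :: "(nat \<Rightarrow> 'a::field) \<Rightarrow> nat \<Rightarrow> 'a"
  assumes lin: "Vector_Spaces.linear fscale fscale \<psi>" and inj: "inj_on \<psi> (msgs K)"
  shows "fv.dim (\<psi> ` msgs K) = K"
proof -
  interpret \<psi>: Vector_Spaces.linear fscale fscale \<psi> by (rule lin)
  let ?U = "unit_word ` {..<K} :: (nat \<Rightarrow> 'a) set"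
  have "fv.span (\<psi> ` ?U) = \<psi> ` msgs K"
    by (simp add: \<psi>.span_image msgs_eq_span_unit_words)
  also have "\<dots> = fv.span (\<psi> ` msgs K)"
    by (metis fv.span_eq_iff \<psi>.subspace_image fv.subspace_span msgs_eq_span_unit_words)
  finally have span: "fv.span (\<psi> ` ?U) = fv.span (\<psi> ` msgs K)" .
  have "fv.independent (\<psi> ` ?U)"
    using \<psi>.dependent_inj_imageD inj independent_unit_words msgs_eq_span_unit_words by metis
  moreover have "inj_on \<psi> ?U"
    using inj by (rule inj_on_subset) (auto simp: msgs_eq_span_unit_words fv.span_base)
  moreover have "card ?U = K"
    by (simp add: card_image inj_on_def)
  ultimately show ?thesis
    using fv.dim_eq_card[OF span] by (simp add: card_image)
qed

lemma restrict_word_image_msgs_eq_words_on: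
  fixes f :: "(nat \<Rightarrow> 'a::{zero,finite}) \<Rightarrow> nat \<Rightarrow> 'a"
  assumes inj: "inj_on (\<lambda>y. restrict_word P (f y)) (msgs K)" and "finite P" and "card P = K"
  shows "(\<lambda>y. restrict_word P (f y)) ` msgs K = words_on P"
proof (rule card_subset_eq)
  show "finite (words_on P :: (nat \<Rightarrow> 'a) set)"
    using \<open>finite P\<close> by (rule finite_words_on)
  show "(\<lambda>y. restrict_word P (f y)) ` msgs K \<subseteq> words_on P"
    by (auto simp: restrict_word_in_words_on)
  show "card ((\<lambda>y. restrict_word P (f y)) ` msgs K) = card (words_on P :: (nat \<Rightarrow> 'a) set)"
    using assms by (simp add: card_image card_words_on msgs_eq_words_on)
qed

lemma inj_on_msgs_of_trivial_kernel:
  assumes "Vector_Spaces.linear fscale fscale \<psi>" and "\<And>y. y \<in> msgs K \<Longrightarrow> \<psi> y = 0 \<Longrightarrow> y = 0"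
  shows "inj_on \<psi> (msgs K)"
proof -
  interpret \<psi>: Vector_Spaces.linear fscale fscale \<psi> by fact
  show ?thesis
    using assms(2) by (simp add: \<psi>.inj_on_iff_eq_0 msgs_eq_span_unit_words fv.subspace_span)
qed

context
  fixes \<psi> :: "(nat \<Rightarrow> 'a::{field,finite}) \<Rightarrow> nat \<Rightarrow> 'a" and K n :: nat and S :: "nat set"
  assumes linear: "Vector_Spaces.linear fscale fscale \<psi>"
    and kernel: "\<And>y. y \<in> msgs K \<Longrightarrow> \<psi> y = 0 \<Longrightarrow> y = 0"
    and S: "finite S" "card S = n"
    and weight: "\<And>y. y \<in> msgs K \<Longrightarrow> \<psi> y \<noteq> 0 \<Longrightarrow> n - K + 1 \<le> hweight S (\<psi> y)"
begin

interpretation \<psi>: Vector_Spaces.linear fscale fscale \<psi> by (rule linear)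

lemma inj_on_restrict_word_msgs:
  assumes "P \<subseteq> S" and "card P = K"
  shows "inj_on (\<lambda>y. restrict_word P (\<psi> y)) (msgs K)"
proof (rule inj_onI)
  fix y z assume y: "y \<in> msgs K" and z: "z \<in> msgs K"
    and eq: "restrict_word P (\<psi> y) = restrict_word P (\<psi> z)"
  have diff: "y - z \<in> msgs K"
    using y z by (simp add: msgs_def)
  have "\<psi> (y - z) = 0"
  proof (rule ccontr)
    assume nz: "\<psi> (y - z) \<noteq> 0"
    have "\<psi> y i = \<psi> z i" if "i \<in> P" for i
      using fun_cong[OF eq, of i] that by (simp add: restrict_word_def)
    then have "{i \<in> S. \<psi> (y - z) i \<noteq> 0} \<subseteq> S - P"
      by (auto simp: \<psi>.diff)
    then have "hweight S (\<psi> (y - z)) \<le> n - K"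
      unfolding hweight_def using S assms
      by (metis card_Diff_subset card_mono finite_Diff finite_subset)
    then show False
      using weight[OF diff nz] by simp
  qed
  then show "y = z"
    using kernel[OF diff] by simp
qed

lemma exists_codeword_weight_le:
  assumes "0 < K" and "K \<le> n"
  shows "\<exists>y\<in>msgs K. \<psi> y \<noteq> 0 \<and> hweight S (\<psi> y) \<le> n - K + 1"
proof -
  obtain P where P: "P \<subseteq> S" "card P = K"
    using obtain_subset_with_card_n[of K S] S \<open>K \<le> n\<close> by auto
  have "finite P"
    using P S finite_subset by blast
  then obtain p where p: "p \<in> P"
    using P \<open>0 < K\<close> by fastforce
  have "unit_word p \<in> (\<lambda>y. restrict_word P (\<psi> y)) ` msgs K"
    using restrict_word_image_msgs_eq_words_on[OF inj_on_restrict_word_msgs[OF P] \<open>finite P\<close> P(2)] p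
    by (simp add: words_on_def unit_word_apply)
  then obtain y where y: "y \<in> msgs K" and unit: "unit_word p = restrict_word P (\<psi> y)"
    by (rule imageE)
  have on_P: "\<psi> y i = unit_word p i" if "i \<in> P" for i
    using fun_cong[OF unit, of i] that by (simp add: restrict_word_def)
  then have "\<psi> y p = 1"
    using p by (simp add: unit_word_apply)
  then have nonzero: "\<psi> y \<noteq> 0"
    by (auto simp: zero_fun_def)
  have "{i \<in> S. \<psi> y i \<noteq> 0} \<subseteq> insert p (S - P)"
    using on_P by (auto simp: unit_word_apply)
  then have "hweight S (\<psi> y) \<le> card (insert p (S - P))"
    unfolding hweight_def using S by (intro card_mono) auto
  also have "\<dots> \<le> n - K + 1"
    using P S \<open>finite P\<close> by (simp add: card_insert_if card_Diff_subset)
  finally show ?thesis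
    using y nonzero by blast
qed

lemma is_MDS_image_msgs:
  assumes "K \<le> n" and support: "\<And>y. y \<in> msgs K \<Longrightarrow> \<psi> y \<in> words_on S"
  shows "is_MDS (\<psi> ` msgs K) S n K"
proof -
  have attained: "\<exists>c\<in>\<psi> ` msgs K. c \<noteq> 0 \<and> hweight S c = n - K + 1"
    if "\<exists>c\<in>\<psi> ` msgs K. c \<noteq> 0"
  proof -
    have "0 < K"
    proof (rule ccontr)
      assume "\<not> 0 < K"
      then have trivial: "y = 0" if "y \<in> msgs K" for y
        using that by (intro ext) (simp add: msgs_def)
      from \<open>\<exists>c\<in>\<psi> ` msgs K. c \<noteq> 0\<close> show False
        using trivial \<psi>.zero by force
    qed
    then obtain y where y: "y \<in> msgs K" "\<psi> y \<noteq> 0" "hweight S (\<psi> y) \<le> n - K + 1"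
      using exists_codeword_weight_le \<open>K \<le> n\<close> by blast
    then have "hweight S (\<psi> y) = n - K + 1"
      using weight[OF y(1,2)] by linarith
    then show ?thesis
      using y by auto
  qed
  have "fv.subspace (\<psi> ` msgs K)"
    by (simp add: \<psi>.subspace_image msgs_eq_span_unit_words)
  moreover have "fv.dim (\<psi> ` msgs K) = K"
    by (rule dim_linear_image_msgs[OF linear inj_on_msgs_of_trivial_kernel[OF linear kernel]])
  moreover have "\<forall>c\<in>\<psi> ` msgs K. \<forall>i. i \<notin> S \<longrightarrow> c i = 0"
    using support by (auto simp: words_on_def)
  moreover have "\<forall>c\<in>\<psi> ` msgs K. c \<noteq> 0 \<longrightarrow> n - K + 1 \<le> hweight S c"
    using weight by auto
  ultimately show ?thesis
    unfolding is_MDS_def has_min_dist_def using S attained by (intro conjI) simp_all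
qed

end

lemma card_picks_one:
  assumes "picks_one E G m" and "\<And>t u. t < m \<Longrightarrow> u < m \<Longrightarrow> t \<noteq> u \<Longrightarrow> G t \<inter> G u = {}"
  shows "card E = m"
proof -
  have one: "card (E \<inter> G t) = 1" if "t < m" for t
    using assms(1) that by (simp add: picks_one_def)
  have "E = (\<Union>t<m. E \<inter> G t)"
    using assms(1) by (auto simp: picks_one_def)
  also have "card \<dots> = (\<Sum>t<m. card (E \<inter> G t))"
  proof (rule card_UN_disjoint)
    show "\<forall>t\<in>{..<m}. finite (E \<inter> G t)"
      using one by (auto intro: card_ge_0_finite)
    show "\<forall>t\<in>{..<m}. \<forall>u\<in>{..<m}. t \<noteq> u \<longrightarrow> E \<inter> G t \<inter> (E \<inter> G u) = {}"
      using assms(2) by blast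
  qed simp
  finally show ?thesis
    using one by simp
qed

lemma card_groups_below:
  assumes "is_grouping g N r" and "t0 \<le> N div r"
  shows "card {l. l < N \<and> g l < t0} = t0 * r"
proof -
  have "{l. l < N \<and> g l < t0} = (\<Union>t<t0. {l. l < N \<and> g l = t})"
    by auto
  also have "card \<dots> = (\<Sum>t<t0. card {l. l < N \<and> g l = t})"
    by (rule card_UN_disjoint) auto
  also have "\<dots> = t0 * r"
    using assms by (simp add: is_grouping_def)
  finally show ?thesis .
qed

lemma linear_local_sym: "Vector_Spaces.linear fscale fscale (local_sym H k)"
  by (rule linear_fscaleI)
    (simp_all add: local_sym_def fscale_def fun_eq_iff sum.distrib distrib_left sum_distrib_left
      mult.left_commute)

lemma linear_local_enc: "Vector_Spaces.linear fscale fscale (local_enc H g k r h)"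
proof -
  interpret L: Vector_Spaces.linear fscale fscale "local_sym H k"
    by (rule linear_local_sym)
  show ?thesis
    by (rule linear_fscaleI)
      (simp_all add: local_enc_def L.add L.scale[unfolded fscale_def] fscale_def fun_eq_iff
        sum.distrib sum_distrib_left)
qed

lemma MR_local_weight:
  assumes "MR_local H g k r h" and "picks_one E (local_group g k h) ((k + h) div r)"
    and "x \<in> msgs k" and "restrict_word (- E) (local_enc H g k r h x) \<noteq> 0"
  shows "h + 1 \<le> hweight ({0..<k + h + (k + h) div r} - E) (restrict_word (- E) (local_enc H g k r h x))"
proof -
  have "is_MDS (puncture (local_code H g k r h) E) ({0..<k + h + (k + h) div r} - E) (k + h) k"
    using assms(1,2) by (simp add: MR_local_def)
  moreover have "restrict_word (- E) (local_enc H g k r h x) \<in> puncture (local_code H g k r h) E"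
    using assms(3) by (simp add: puncture_eq_image_restrict_word local_code_def)
  ultimately show ?thesis
    using assms(4) by (simp add: is_MDS_def has_min_dist_def)
qed

lemma MR_local_information_set:
  fixes H :: "nat \<Rightarrow> nat \<Rightarrow> 'a::{field,finite}"
  assumes MR: "MR_local H g k r h" and P: "P \<subseteq> {..<k + h}" "card P = k"
  shows "bij_betw (\<lambda>x. restrict_word P (local_sym H k x)) (msgs k) (words_on P)"
proof -
  define E where "E = (\<lambda>t. k + h + t) ` {..<(k + h) div r}"
  define \<psi> where "\<psi> = restrict_word (- E) \<circ> local_enc H g k r h"
  have S: "{0..<k + h + (k + h) div r} - E = {..<k + h}"
  proof -
    have "i \<in> E" if "k + h \<le> i" "i < k + h + (k + h) div r" for i
      using that unfolding E_def by (intro image_eqI[of _ _ "i - (k + h)"]) auto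
    moreover have "E \<inter> {..<k + h} = {}"
      by (auto simp: E_def)
    ultimately show ?thesis
      by (auto simp: not_less)
  qed
  have picks: "picks_one E (local_group g k h) ((k + h) div r)"
  proof -
    have "E \<inter> local_group g k h t = {k + h + t}" if "t < (k + h) div r" for t
      using that by (auto simp: E_def local_group_def)
    then show ?thesis
      by (auto simp: picks_one_def E_def local_group_def)
  qed
  have weight: "k + h - k + 1 \<le> hweight {..<k + h} (\<psi> x)"
    if "x \<in> msgs k" "\<psi> x \<noteq> 0" for x
    using MR_local_weight[OF MR picks that(1)] that(2) S by (simp add: \<psi>_def)
  have low: "\<psi> x i = local_sym H k x i" if "i < k + h" for x i
    using that by (auto simp: \<psi>_def restrict_word_def E_def local_enc_def)
  have kernel: "x = 0" if "x \<in> msgs k" "\<psi> x = 0" for x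
  proof
    fix i
    show "x i = 0 i"
      using that low[of i x] by (cases "i < k") (simp_all add: msgs_def local_sym_def)
  qed
  have linear: "Vector_Spaces.linear fscale fscale \<psi>"
    unfolding \<psi>_def by (rule Vector_Spaces.linear_compose[OF linear_local_enc linear_restrict_word])
  have "restrict_word P (\<psi> x) = restrict_word P (local_sym H k x)" for x
    using P(1) low by (auto simp: restrict_word_def fun_eq_iff)
  moreover have "inj_on (\<lambda>x. restrict_word P (\<psi> x)) (msgs k)"
    by (rule inj_on_restrict_word_msgs[OF linear kernel _ _ weight P]) simp_all
  ultimately show ?thesis
    using restrict_word_image_msgs_eq_words_on[of P "local_sym H k" k] P
    by (simp add: bij_betw_def finite_subset)
qed

lemma linear_dl_enc: "Vector_Spaces.linear fscale fscale (dl_enc H g k r h)"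
  by (rule linear_fscaleI)
    (simp_all add: dl_enc_def fscale_def fun_eq_iff sum.distrib distrib_left sum_distrib_left
      mult.left_commute)

lemma dl_puncture_kernel:
  assumes grouping: "is_grouping g k r" and E: "picks_one E (dl_group g k) (k div r)"
    and y: "y \<in> msgs k" and zero: "restrict_word (- E) (dl_enc H g k r h y) = 0"
  shows "y = 0"
proof
  fix i
  have vanish: "dl_enc H g k r h y p = 0" if "p \<notin> E" for p
    using fun_cong[OF zero, of p] that by (simp add: restrict_word_def)
  show "y i = 0 i"
  proof (cases "i < k \<and> i \<in> E")
    case False
    then show ?thesis
      using y vanish[of i] by (cases "i < k") (simp_all add: msgs_def dl_enc_def)
  next
    case True
    define t where "t = g i"
    define F where "F = {l. l < k \<and> g l = t}"
    have t: "t < k div r"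
      using grouping True by (simp add: is_grouping_def t_def)
    have "card (E \<inter> dl_group g k t) = 1"
      using E t by (simp add: picks_one_def)
    moreover have "i \<in> E \<inter> dl_group g k t"
      using True by (simp add: dl_group_def t_def)
    ultimately have single: "E \<inter> dl_group g k t = {i}"
      by (metis card_1_singletonE singletonD)
    have others: "y l = 0" if "l \<in> F - {i}" for l
      using that single vanish[of l] by (auto simp: F_def dl_group_def dl_enc_def)
    have "k + t \<notin> E"
      using single True by (auto simp: dl_group_def)
    then have "0 = (\<Sum>l\<in>F. y l)"
      using vanish[of "k + t"] t by (simp add: dl_enc_def F_def)
    also have "\<dots> = y i + (\<Sum>l\<in>F - {i}. y l)"
      using True by (intro sum.remove) (auto simp: F_def t_def)
    also have "(\<Sum>l\<in>F - {i}. y l) = 0"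
      using others by simp
    finally show ?thesis
      by simp
  qed
qed

lemma MR_data_local_of_weight_bound:
  fixes H :: "nat \<Rightarrow> nat \<Rightarrow> 'a::{field,finite}"
  assumes grouping: "is_grouping g k r"
    and weight: "\<And>E y. picks_one E (dl_group g k) (k div r) \<Longrightarrow> y \<in> msgs k \<Longrightarrow>
      restrict_word (- E) (dl_enc H g k r h y) \<noteq> 0 \<Longrightarrow>
      h + 1 \<le> hweight ({0..<k + k div r + h} - E) (restrict_word (- E) (dl_enc H g k r h y))"
  shows "MR_data_local H g k r h"
  unfolding MR_data_local_def
proof (intro conjI allI impI)
  fix E assume E: "picks_one E (dl_group g k) (k div r)"
  define \<psi> where "\<psi> = restrict_word (- E) \<circ> dl_enc H g k r h"
  define S where "S = {0..<k + k div r + h} - E"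
  have "E \<subseteq> {0..<k + k div r + h}"
    using E by (auto simp: picks_one_def dl_group_def)
  moreover have "card E = k div r"
    by (rule card_picks_one[OF E]) (auto simp: dl_group_def)
  ultimately have "card S = k + h"
    unfolding S_def by (subst card_Diff_subset) (auto intro: finite_subset)
  moreover have "\<psi> y \<in> words_on S" for y
    by (simp add: \<psi>_def S_def words_on_def restrict_word_def dl_enc_def)
  moreover have "Vector_Spaces.linear fscale fscale \<psi>"
    unfolding \<psi>_def by (rule Vector_Spaces.linear_compose[OF linear_dl_enc linear_restrict_word])
  ultimately have "is_MDS (\<psi> ` msgs k) S (k + h) k"
    using dl_puncture_kernel[OF grouping E] weight[OF E]
    by (intro is_MDS_image_msgs) (simp_all add: \<psi>_def S_def)
  then show "is_MDS (puncture (dl_code H g k r h) E) ({0..<k + k div r + h} - E) (k + h) k"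
    by (simp add: puncture_eq_image_restrict_word dl_code_def image_comp \<psi>_def S_def)
qed (rule grouping)

section \<open>Shortening a local code to a data-local code\<close>

text \<open>\<open>\<sigma>\<close> enumerates the data and heavy coordinates of the first \<open>k'/r\<close> local groups,
\<open>A\<close> holds the \<open>k - k'\<close> coordinates on which the chosen subcode vanishes, and \<open>\<tau>\<close>
enumerates the remaining \<open>h\<close> coordinates, which become the heavy parities.\<close>

locale MR_shortening =
  fixes H :: "nat \<Rightarrow> nat \<Rightarrow> 'a::{field,finite}" and g :: "nat \<Rightarrow> nat"
    and k r h k' :: nat and A :: "nat set" and \<sigma> \<tau> :: "nat \<Rightarrow> nat"
  assumes MR: "MR_local H g k r h"
    and k': "k' \<le> k" "r dvd k'"
    and A: "A \<subseteq> {l. l < k + h \<and> k' div r \<le> g l}" "card A = k - k'"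
    and \<sigma>: "bij_betw \<sigma> {..<k'} {l. l < k + h \<and> g l < k' div r}"
    and \<tau>: "bij_betw \<tau> {..<h} ({l. l < k + h \<and> k' div r \<le> g l} - A)"
begin

abbreviation m where "m \<equiv> (k + h) div r"
abbreviation m' where "m' \<equiv> k' div r"
abbreviation D where "D \<equiv> {l. l < k + h \<and> g l < m'}"
abbreviation P where "P \<equiv> D \<union> A"

lemma grouping: "is_grouping g (k + h) r"
  using MR by (simp add: MR_local_def)

lemma m'_le_m: "m' \<le> m"
  using k' by (simp add: div_le_mono)

lemma \<sigma>_mem: "i < k' \<Longrightarrow> \<sigma> i < k + h \<and> g (\<sigma> i) < m'"
  using bij_betw_apply[OF \<sigma>] by auto

lemma \<tau>_mem: "j < h \<Longrightarrow> \<tau> j < k + h \<and> m' \<le> g (\<tau> j) \<and> \<tau> j \<notin> A"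
  using bij_betw_apply[OF \<tau>] by auto

lemma information_set: "bij_betw (\<lambda>x. restrict_word P (local_sym H k x)) (msgs k) (words_on P)"
proof (rule MR_local_information_set[OF MR])
  show "P \<subseteq> {..<k + h}"
    using A by auto
  have "card D = k'"
    using bij_betw_same_card[OF \<sigma>] by simp
  moreover have "D \<inter> A = {}"
    using A by auto
  ultimately show "card P = k"
    using A k' by (simp add: card_Un_disjoint finite_subset)
qed

definition base_msg :: "nat \<Rightarrow> nat \<Rightarrow> 'a" where
  "base_msg i = inv_into (msgs k) (\<lambda>x. restrict_word P (local_sym H k x)) (unit_word (\<sigma> i))"

lemma base_msg:
  assumes "i < k'"
  shows "base_msg i \<in> msgs k" and "restrict_word P (local_sym H k (base_msg i)) = unit_word (\<sigma> i)"
proof -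
  have "unit_word (\<sigma> i) \<in> words_on P"
    using \<sigma>_mem[OF assms] by (auto simp: words_on_def unit_word_apply)
  then have "unit_word (\<sigma> i) \<in> (\<lambda>x. restrict_word P (local_sym H k x)) ` msgs k"
    using information_set by (simp add: bij_betw_def)
  then show "base_msg i \<in> msgs k" "restrict_word P (local_sym H k (base_msg i)) = unit_word (\<sigma> i)"
    unfolding base_msg_def by (rule inv_into_into, rule f_inv_into_f)
qed

definition lift_msg :: "(nat \<Rightarrow> 'a) \<Rightarrow> nat \<Rightarrow> 'a" where
  "lift_msg y = (\<Sum>i<k'. fscale (y i) (base_msg i))"

definition H' :: "nat \<Rightarrow> nat \<Rightarrow> 'a" where
  "H' j i = local_sym H k (base_msg i) (\<tau> j)"

lemma lift_msg_in_msgs: "lift_msg y \<in> msgs k"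
  using base_msg(1) by (auto simp: lift_msg_def msgs_def sum_fun_apply fscale_def)

lemma local_sym_lift_msg: "local_sym H k (lift_msg y) l = (\<Sum>i<k'. y i * local_sym H k (base_msg i) l)"
proof -
  interpret L: Vector_Spaces.linear fscale fscale "local_sym H k"
    by (rule linear_local_sym)
  show ?thesis
    by (simp add: lift_msg_def L.sum L.scale[unfolded fscale_def] sum_fun_apply fscale_def)
qed

lemma local_sym_base_msg_on_P:
  "i < k' \<Longrightarrow> l \<in> P \<Longrightarrow> local_sym H k (base_msg i) l = unit_word (\<sigma> i) l"
  using fun_cong[OF base_msg(2), of i l] by (simp add: restrict_word_def)

lemma local_sym_lift_msg_\<sigma>: "i < k' \<Longrightarrow> local_sym H k (lift_msg y) (\<sigma> i) = y i"
proof -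
  assume i: "i < k'"
  have "local_sym H k (lift_msg y) (\<sigma> i) = (\<Sum>i'<k'. if i' = i then y i' else 0)"
    unfolding local_sym_lift_msg
  proof (rule sum.cong)
    fix i' assume "i' \<in> {..<k'}"
    then show "y i' * local_sym H k (base_msg i') (\<sigma> i) = (if i' = i then y i' else 0)"
      using i \<sigma>_mem[OF i] local_sym_base_msg_on_P[of i' "\<sigma> i"] bij_betw_imp_inj_on[OF \<sigma>]
      by (auto simp: unit_word_apply dest: inj_onD)
  qed simp
  then show ?thesis
    using i by simp
qed

lemma local_sym_lift_msg_A:
  assumes "l \<in> A"
  shows "local_sym H k (lift_msg y) l = 0"
proof -
  have distinct: "l \<noteq> \<sigma> i" if "i < k'" for i
    using \<sigma>_mem[OF that] A(1) assms by auto
  show ?thesis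
    unfolding local_sym_lift_msg using assms
    by (intro sum.neutral ballI) (simp add: local_sym_base_msg_on_P unit_word_apply distinct)
qed

lemma local_sym_lift_msg_\<tau>: "local_sym H k (lift_msg y) (\<tau> j) = (\<Sum>i<k'. H' j i * y i)"
  by (simp add: local_sym_lift_msg H'_def mult.commute)

definition g' :: "nat \<Rightarrow> nat" where
  "g' = g \<circ> \<sigma>"

lemma \<sigma>_image_group:
  assumes "t < m'"
  shows "\<sigma> ` {l. l < k' \<and> g' l = t} = {l. l < k + h \<and> g l = t}"
proof
  show "\<sigma> ` {l. l < k' \<and> g' l = t} \<subseteq> {l. l < k + h \<and> g l = t}"
    using \<sigma>_mem by (auto simp: g'_def)
  show "{l. l < k + h \<and> g l = t} \<subseteq> \<sigma> ` {l. l < k' \<and> g' l = t}"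
  proof
    fix l assume l: "l \<in> {l. l < k + h \<and> g l = t}"
    then have "l \<in> \<sigma> ` {..<k'}"
      using assms bij_betw_imp_surj_on[OF \<sigma>] by auto
    then show "l \<in> \<sigma> ` {l. l < k' \<and> g' l = t}"
      using l by (auto simp: g'_def)
  qed
qed

lemma grouping': "is_grouping g' k' r"
  unfolding is_grouping_def
proof (intro conjI allI impI)
  show "0 < r" "r dvd k'"
    using grouping k' by (simp_all add: is_grouping_def)
  show "g' l < m'" if "l < k'" for l
    using \<sigma>_mem[OF that] by (simp add: g'_def)
  fix t assume t: "t < m'"
  have "inj_on \<sigma> {l. l < k' \<and> g' l = t}"
    using bij_betw_imp_inj_on[OF \<sigma>] by (rule inj_on_subset) auto
  then have "card {l. l < k' \<and> g' l = t} = card {l. l < k + h \<and> g l = t}"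
    using \<sigma>_image_group[OF t] card_image by fastforce
  also have "\<dots> = r"
    using grouping t m'_le_m by (simp add: is_grouping_def)
  finally show "card {l. l < k' \<and> g' l = t} = r" .
qed

text \<open>Coordinate \<open>p\<close> of the data-local code is coordinate \<open>lift_coord p\<close> of the local code.\<close>

definition lift_coord :: "nat \<Rightarrow> nat" where
  "lift_coord p = (if p < k' then \<sigma> p else if p < k' + m' then k + h + (p - k') else \<tau> (p - (k' + m')))"

lemma lift_coord_data: "p < k' \<Longrightarrow> lift_coord p = \<sigma> p \<and> lift_coord p < k + h \<and> g (lift_coord p) < m'"
  using \<sigma>_mem by (simp add: lift_coord_def)

lemma lift_coord_parity: "k' \<le> p \<Longrightarrow> p < k' + m' \<Longrightarrow> lift_coord p = k + h + (p - k')"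
  by (simp add: lift_coord_def)

lemma lift_coord_heavy:
  "k' + m' \<le> p \<Longrightarrow> p < k' + m' + h \<Longrightarrow>
    lift_coord p = \<tau> (p - (k' + m')) \<and> lift_coord p < k + h \<and> m' \<le> g (lift_coord p) \<and> lift_coord p \<notin> A"
  using \<tau>_mem[of "p - (k' + m')"] by (simp add: lift_coord_def)

lemma lift_coord_class:
  assumes "p < k' + m' + h"
  shows "p < k' \<longleftrightarrow> lift_coord p < k + h \<and> g (lift_coord p) < m'"
    and "k' + m' \<le> p \<longleftrightarrow> lift_coord p < k + h \<and> m' \<le> g (lift_coord p)"
  using lift_coord_data[of p] lift_coord_parity[of p] lift_coord_heavy[of p] assms
  by (cases "p < k'"; cases "p < k' + m'"; auto)+

lemma dl_enc_local_parity:
  assumes t: "t < m'"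
  shows "dl_enc H' g' k' r h y (k' + t) = local_enc H g k r h (lift_msg y) (k + h + t)"
proof -
  have "dl_enc H' g' k' r h y (k' + t) = (\<Sum>l | l < k' \<and> g' l = t. y l)"
    using t by (simp add: dl_enc_def)
  also have "\<dots> = (\<Sum>l | l < k' \<and> g' l = t. local_sym H k (lift_msg y) (\<sigma> l))"
    by (rule sum.cong) (simp_all add: local_sym_lift_msg_\<sigma>)
  also have "\<dots> = (\<Sum>l\<in>\<sigma> ` {l. l < k' \<and> g' l = t}. local_sym H k (lift_msg y) l)"
  proof -
    have "inj_on \<sigma> {l. l < k' \<and> g' l = t}"
      by (rule inj_on_subset[OF bij_betw_imp_inj_on[OF \<sigma>]]) auto
    then show ?thesis
      by (simp add: sum.reindex)
  qed
  also have "\<dots> = (\<Sum>l | l < k + h \<and> g l = t. local_sym H k (lift_msg y) l)"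
    by (simp only: \<sigma>_image_group[OF t])
  also have "\<dots> = local_enc H g k r h (lift_msg y) (k + h + t)"
    using t m'_le_m by (simp add: local_enc_def)
  finally show ?thesis .
qed

lemma dl_enc_eq_local_enc:
  assumes "p < k' + m' + h"
  shows "dl_enc H' g' k' r h y p = local_enc H g k r h (lift_msg y) (lift_coord p)"
proof -
  consider "p < k'" | "k' \<le> p" "p < k' + m'" | "k' + m' \<le> p"
    by linarith
  then show ?thesis
  proof cases
    case 1
    have "local_enc H g k r h (lift_msg y) (\<sigma> p) = local_sym H k (lift_msg y) (\<sigma> p)"
      using \<sigma>_mem[OF 1] by (simp add: local_enc_def)
    then show ?thesis
      using 1 by (simp add: dl_enc_def lift_coord_def local_sym_lift_msg_\<sigma>)
  next
    case 2
    then show ?thesis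
      using dl_enc_local_parity[of "p - k'" y] by (simp add: lift_coord_def)
  next
    case 3
    define j where "j = p - (k' + m')"
    have j: "j < h"
      using 3 assms by (simp add: j_def)
    have "dl_enc H' g' k' r h y p = (\<Sum>i<k'. H' j i * y i)"
      using 3 assms by (simp add: dl_enc_def j_def)
    also have "\<dots> = local_enc H g k r h (lift_msg y) (\<tau> j)"
      using \<tau>_mem[OF j] by (simp add: local_enc_def local_sym_lift_msg_\<tau>)
    finally show ?thesis
      using 3 by (simp add: lift_coord_def j_def)
  qed
qed

lemma inj_on_lift_coord: "inj_on lift_coord {..<k' + m' + h}"
proof (rule inj_onI)
  fix p q assume p: "p \<in> {..<k' + m' + h}" and q: "q \<in> {..<k' + m' + h}" and eq: "lift_coord p = lift_coord q"
  consider "p < k'" | "k' \<le> p" "p < k' + m'" | "k' + m' \<le> p"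
    by linarith
  then show "p = q"
  proof cases
    case 1
    then have "q < k'"
      using lift_coord_class(1)[of p] lift_coord_class(1)[of q] p q eq by auto
    then show ?thesis
      using 1 eq lift_coord_data[of p] lift_coord_data[of q] bij_betw_imp_inj_on[OF \<sigma>] by (auto dest: inj_onD)
  next
    case 2
    then have "\<not> q < k'" "\<not> k' + m' \<le> q"
      using lift_coord_class[of q] lift_coord_parity[OF 2] p q eq by auto
    then show ?thesis
      using 2 eq lift_coord_parity[of p] lift_coord_parity[of q] by simp
  next
    case 3
    then have q3: "k' + m' \<le> q"
      using lift_coord_class(2)[of p] lift_coord_class(2)[of q] p q eq by auto
    then have "p - (k' + m') = q - (k' + m')"
      using 3 q3 eq p q lift_coord_heavy[of p] lift_coord_heavy[of q] bij_betw_imp_inj_on[OF \<tau>]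
      by (auto dest: inj_onD)
    then show ?thesis
      using 3 q3 by simp
  qed
qed

lemma lift_coord_local_group:
  assumes "p < k' + m'"
  shows "lift_coord p \<in> local_group g k h t \<longleftrightarrow> p \<in> dl_group g' k' t"
  using lift_coord_data[of p] lift_coord_parity[of p] assms
  by (cases "p < k'") (auto simp: local_group_def dl_group_def g'_def)

lemma lift_coord_range:
  assumes "i < k + h + m" and "i \<notin> A" and "i \<notin> (\<lambda>t. k + h + t) ` {m'..<m}"
  shows "i \<in> lift_coord ` {..<k' + m' + h}"
proof (cases "i < k + h")
  case True
  show ?thesis
  proof (cases "g i < m'")
    case True
    then obtain p where "p < k'" "i = \<sigma> p"
      using bij_betw_imp_surj_on[OF \<sigma>] \<open>i < k + h\<close> by (metis (mono_tags, lifting) imageE lessThan_iff mem_Collect_eq)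
    then show ?thesis
      using lift_coord_data[of p] by (intro image_eqI[of _ _ p]) auto
  next
    case False
    then obtain j where "j < h" "i = \<tau> j"
      using bij_betw_imp_surj_on[OF \<tau>] \<open>i < k + h\<close> assms(2)
      by (metis (mono_tags, lifting) DiffI imageE lessThan_iff mem_Collect_eq not_less)
    then show ?thesis
      using lift_coord_heavy[of "k' + m' + j"] by (intro image_eqI[of _ _ "k' + m' + j"]) auto
  qed
next
  case False
  define t where "t = i - (k + h)"
  have "t < m'"
    using False assms(1,3) unfolding t_def
    by (metis add_diff_inverse_nat add_less_cancel_left atLeastLessThan_iff image_eqI not_less)
  then show ?thesis
    using False lift_coord_parity[of "k' + t"] by (intro image_eqI[of _ _ "k' + t"]) (auto simp: t_def)
qed

definition lift_erasures :: "nat set \<Rightarrow> nat set" where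
  "lift_erasures E' = lift_coord ` E' \<union> (\<lambda>t. k + h + t) ` {m'..<m}"

lemma picks_one_dl_bound: "picks_one E' (dl_group g' k') m' \<Longrightarrow> E' \<subseteq> {..<k' + m'}"
  by (auto simp: picks_one_def dl_group_def)

lemma lift_coord_in_lift_erasures_iff:
  assumes "picks_one E' (dl_group g' k') m'" and "p < k' + m' + h"
  shows "lift_coord p \<in> lift_erasures E' \<longleftrightarrow> p \<in> E'"
proof -
  have "lift_coord p \<in> lift_coord ` E' \<longleftrightarrow> p \<in> E'"
    using picks_one_dl_bound[OF assms(1)] assms(2)
    by (intro inj_on_image_mem_iff[OF inj_on_lift_coord]) auto
  moreover have "lift_coord p \<notin> (\<lambda>t. k + h + t) ` {m'..<m}"
    using lift_coord_data[of p] lift_coord_parity[of p] lift_coord_heavy[of p] assms(2)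
    by (cases "p < k'"; cases "p < k' + m'") auto
  ultimately show ?thesis
    unfolding lift_erasures_def by blast
qed

lemma lift_erasures_inter_local_group:
  assumes "picks_one E' (dl_group g' k') m'" and "t < m"
  shows "lift_erasures E' \<inter> local_group g k h t =
    lift_coord ` (E' \<inter> dl_group g' k' t) \<union> (if m' \<le> t then {k + h + t} else {})"
proof -
  have "lift_coord ` E' \<inter> local_group g k h t = lift_coord ` (E' \<inter> dl_group g' k' t)"
    using picks_one_dl_bound[OF assms(1)] lift_coord_local_group by auto
  moreover have "(\<lambda>t. k + h + t) ` {m'..<m} \<inter> local_group g k h t = (if m' \<le> t then {k + h + t} else {})"
    using assms(2) by (auto simp: local_group_def)
  ultimately show ?thesis
    by (auto simp: lift_erasures_def)
qed

lemma picks_one_lift_erasures: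
  assumes E': "picks_one E' (dl_group g' k') m'"
  shows "picks_one (lift_erasures E') (local_group g k h) m"
  unfolding picks_one_def
proof (intro conjI allI impI)
  have bound: "E' \<subseteq> {..<k' + m'}"
    by (rule picks_one_dl_bound[OF E'])
  show "lift_erasures E' \<subseteq> (\<Union>t<m. local_group g k h t)"
  proof
    fix i assume "i \<in> lift_erasures E'"
    then consider p t where "p \<in> E'" "t < m'" "p \<in> dl_group g' k' t" "i = lift_coord p"
      | t where "m' \<le> t" "t < m" "i = k + h + t"
      using E' unfolding lift_erasures_def picks_one_def by fastforce
    then show "i \<in> (\<Union>t<m. local_group g k h t)"
    proof cases
      case 1
      then show ?thesis
        using bound lift_coord_local_group m'_le_m by fastforce
    next
      case 2
      then show ?thesis
        by (auto simp: local_group_def)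
    qed
  qed
  fix t assume t: "t < m"
  show "card (lift_erasures E' \<inter> local_group g k h t) = 1"
  proof (cases "t < m'")
    case True
    have "inj_on lift_coord (E' \<inter> dl_group g' k' t)"
      using bound by (intro inj_on_subset[OF inj_on_lift_coord]) auto
    then show ?thesis
      using True E' lift_erasures_inter_local_group[OF E' t] by (simp add: card_image picks_one_def)
  next
    case False
    have "E' \<inter> dl_group g' k' t = {}"
      using False bound grouping' by (auto simp: dl_group_def is_grouping_def)
    then show ?thesis
      using False lift_erasures_inter_local_group[OF E' t] by simp
  qed
qed

lemma punctured_local_enc_lift_coord:
  assumes "picks_one E' (dl_group g' k') m'" and "p < k' + m' + h"
  shows "restrict_word (- lift_erasures E') (local_enc H g k r h (lift_msg y)) (lift_coord p) =
    restrict_word (- E') (dl_enc H' g' k' r h y) p"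
  using lift_coord_in_lift_erasures_iff[OF assms] dl_enc_eq_local_enc[OF assms(2)]
  by (simp add: restrict_word_def)

lemma dl_puncture_weight_ge:
  assumes E': "picks_one E' (dl_group g' k') m'" and y: "y \<in> msgs k'"
    and nonzero: "restrict_word (- E') (dl_enc H' g' k' r h y) \<noteq> 0"
  shows "h + 1 \<le> hweight ({0..<k' + m' + h} - E') (restrict_word (- E') (dl_enc H' g' k' r h y))"
proof -
  define E where "E = lift_erasures E'"
  define c where "c = restrict_word (- E) (local_enc H g k r h (lift_msg y))"
  define c' where "c' = restrict_word (- E') (dl_enc H' g' k' r h y)"
  have agree: "c (lift_coord p) = c' p" if "p < k' + m' + h" for p
    using punctured_local_enc_lift_coord[OF E' that] by (simp add: c_def c'_def E_def)
  obtain p where p: "c' p \<noteq> 0"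
    using nonzero by (auto simp: c'_def fun_eq_iff)
  then have "p < k' + m' + h"
    by (auto simp: c'_def restrict_word_def dl_enc_def split: if_splits)
  then have "c \<noteq> 0"
    using agree p by (metis zero_fun_apply)
  then have "h + 1 \<le> hweight ({0..<k + h + m} - E) c"
    unfolding c_def E_def
    by (rule MR_local_weight[OF MR picks_one_lift_erasures[OF E'] lift_msg_in_msgs])
  also have "\<dots> \<le> card (lift_coord ` {p \<in> {0..<k' + m' + h} - E'. c' p \<noteq> 0})"
    unfolding hweight_def
  proof (rule card_mono)
    show "{i \<in> {0..<k + h + m} - E. c i \<noteq> 0} \<subseteq> lift_coord ` {p \<in> {0..<k' + m' + h} - E'. c' p \<noteq> 0}"
    proof
      fix i assume i: "i \<in> {i \<in> {0..<k + h + m} - E. c i \<noteq> 0}"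
      \<comment> \<open>the lifted codeword vanishes on \<open>A\<close> and the parities of the other groups are erased\<close>
      then have "i \<notin> A"
        using local_sym_lift_msg_A A(1) by (auto simp: c_def restrict_word_def local_enc_def)
      moreover have "i \<notin> (\<lambda>t. k + h + t) ` {m'..<m}"
        using i by (auto simp: E_def lift_erasures_def)
      ultimately obtain q where q: "q < k' + m' + h" "i = lift_coord q"
        using lift_coord_range i by auto
      then show "i \<in> lift_coord ` {p \<in> {0..<k' + m' + h} - E'. c' p \<noteq> 0}"
        using i agree[OF q(1)] lift_coord_in_lift_erasures_iff[OF E' q(1)]
        by (auto simp: E_def c_def restrict_word_def)
    qed
  qed simp
  also have "\<dots> \<le> hweight ({0..<k' + m' + h} - E') c'"
    unfolding hweight_def by (rule card_image_le) simp
  finally show ?thesis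
    by (simp add: c'_def)
qed

theorem MR_data_local: "MR_data_local H' g' k' r h"
  using MR_data_local_of_weight_bound[OF grouping'] dl_puncture_weight_ge by blast

end

lemma MR_shortening_exists:
  fixes H :: "nat \<Rightarrow> nat \<Rightarrow> 'a::{field,finite}"
  assumes MR: "MR_local H g k r h" and k': "k' \<le> k" "r dvd k'"
  shows "\<exists>A \<sigma> \<tau>. MR_shortening H g k r h k' A \<sigma> \<tau>"
proof -
  define D where "D = {l. l < k + h \<and> g l < k' div r}"
  define Q where "Q = {l. l < k + h \<and> k' div r \<le> g l}"
  have grouping: "is_grouping g (k + h) r"
    using MR by (simp add: MR_local_def)
  have "card D = k'"
    using card_groups_below[OF grouping, of "k' div r"] k' by (simp add: D_def div_le_mono)
  moreover have "Q = {..<k + h} - D"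
    by (auto simp: D_def Q_def)
  moreover have "D \<subseteq> {..<k + h}" "finite D"
    by (auto simp: D_def)
  ultimately have card_Q: "card Q = k + h - k'"
    by (simp add: card_Diff_subset)
  moreover have "k - k' \<le> k + h - k'"
    by simp
  ultimately obtain A where A: "A \<subseteq> Q" "card A = k - k'"
    by (metis obtain_subset_with_card_n)
  have "finite Q"
    by (simp add: Q_def)
  then have "card (Q - A) = h"
    using A card_Q k' by (simp add: card_Diff_subset finite_subset)
  then obtain \<tau> where \<tau>: "bij_betw \<tau> {..<h} (Q - A)"
    using finite_same_card_bij[of "{..<h}" "Q - A"] \<open>finite Q\<close> by auto
  obtain \<sigma> where \<sigma>: "bij_betw \<sigma> {..<k'} D"
    using finite_same_card_bij[of "{..<k'}" D] \<open>card D = k'\<close> by (auto simp: D_def)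
  have "MR_shortening H g k r h k' A \<sigma> \<tau>"
    by unfold_locales (use MR k' A \<sigma> \<tau> in \<open>simp_all add: D_def Q_def\<close>)
  then show ?thesis
    by blast
qed

theorem lemma7:
  fixes k r h k' :: nat
  assumes "0 < k" and "0 < r" and "0 < h" and "r dvd (k + h)"
    and "k' = (GREATEST m. m \<le> k \<and> r dvd m)"
    and "\<exists>(H :: nat \<Rightarrow> nat \<Rightarrow> 'a::{field,finite}) g. MR_local H g k r h"
  shows "\<exists>(H :: nat \<Rightarrow> nat \<Rightarrow> 'a) g. MR_data_local H g k' r h"
  \<comment> \<open>only the last two hypotheses are used: \<open>MR_local\<close> already provides the grouping\<close>
proof -
  obtain H :: "nat \<Rightarrow> nat \<Rightarrow> 'a" and g where MR: "MR_local H g k r h"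
    using assms(6) by blast
  have "k' \<le> k \<and> r dvd k'"
    unfolding assms(5) by (rule GreatestI_nat[of _ 0 k]) auto
  then obtain A \<sigma> \<tau> where "MR_shortening H g k r h k' A \<sigma> \<tau>"
    using MR_shortening_exists[OF MR] by blast
  then show ?thesis
    using MR_shortening.MR_data_local by blast
qed

end
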